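(* Let $E$ be a $p$-adic field, $\psi$ a nontrivial additive character of $E$, and $f_1,\dots,f_n$ analytic functions on a ball $B\subset E^N$ centered at $0$ whose differentials $d_0f_1,\dots,d_0f_n$ at $0$ are linearly independent. Then there is $a\in E^*$ such that for all $t\in E^*$ with $|t|$ sufficiently large, the functions $\psi(tf_1),\dots,\psi(tf_n)$ restricted to $t^{-1}aB$ are linearly independent. *)

theory Defs
  imports Complex_Main
begin

definition nonarch_abs :: "('a::field \<Rightarrow> real) \<Rightarrow> bool" where
  "nonarch_abs absv \<longleftrightarrow>
     (\<forall>x. absv x \<ge> 0) \<and> (\<forall>x. absv x = 0 \<longleftrightarrow> x = 0) \<and>
     (\<forall>x y. absv (x * y) = absv x * absv y) \<and>
     (\<forall>x y. absv (x + y) \<le> max (absv x) (absv y))"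

definition abs_complete :: "('a::field \<Rightarrow> real) \<Rightarrow> bool" where
  "abs_complete absv \<longleftrightarrow>
     (\<forall>X :: nat \<Rightarrow> 'a.
        (\<forall>\<epsilon>>0. \<exists>N. \<forall>m\<ge>N. \<forall>k\<ge>N. absv (X m - X k) < \<epsilon>) \<longrightarrow>
        (\<exists>L. \<forall>\<epsilon>>0. \<exists>N. \<forall>m\<ge>N. absv (X m - L) < \<epsilon>))"

text \<open>A p-adic field: a field of characteristic 0 (type class) with a nontrivial,
  discretely valued, complete non-archimedean absolute value with finite residue
  field, i.e. a non-archimedean local field of characteristic 0 (= finite extension
  of some Q_p).\<close>
definition p_adic_field :: "('a::field_char_0 \<Rightarrow> real) \<Rightarrow> bool" where
  "p_adic_field absv \<longleftrightarrow>
     nonarch_abs absv \<and>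
     (\<exists>x. x \<noteq> 0 \<and> absv x \<noteq> 1) \<and>
     (\<exists>r<1. \<forall>x. absv x < 1 \<longrightarrow> absv x \<le> r) \<and>
     abs_complete absv \<and>
     finite ({x. absv x \<le> 1} //
             {(x, y). absv x \<le> 1 \<and> absv y \<le> 1 \<and> absv (x - y) < 1})"

definition nontriv_add_char :: "('a::field \<Rightarrow> real) \<Rightarrow> ('a \<Rightarrow> complex) \<Rightarrow> bool" where
  "nontriv_add_char absv \<psi> \<longleftrightarrow>
     (\<forall>x y. \<psi> (x + y) = \<psi> x * \<psi> y) \<and>
     (\<forall>x. cmod (\<psi> x) = 1) \<and>
     (\<forall>x. \<forall>\<epsilon>>0. \<exists>\<delta>>0. \<forall>y. absv (y - x) < \<delta> \<longrightarrow> cmod (\<psi> y - \<psi> x) < \<epsilon>) \<and>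
     (\<exists>x. \<psi> x \<noteq> 1)"

definition vnorm :: "('a::field \<Rightarrow> real) \<Rightarrow> ('n::finite \<Rightarrow> 'a) \<Rightarrow> real" where
  "vnorm absv x = Max (range (\<lambda>i. absv (x i)))"

definition vball0 :: "('a::field \<Rightarrow> real) \<Rightarrow> real \<Rightarrow> ('n::finite \<Rightarrow> 'a) set" where
  "vball0 absv r = {x. vnorm absv x \<le> r}"

definition vscale :: "'a::field \<Rightarrow> ('n \<Rightarrow> 'a) \<Rightarrow> ('n \<Rightarrow> 'a)" where
  "vscale c x = (\<lambda>i. c * x i)"

definition mdeg :: "('n::finite \<Rightarrow> nat) \<Rightarrow> nat" where
  "mdeg \<alpha> = (\<Sum>i\<in>UNIV. \<alpha> i)"

definition mmonom :: "('n::finite \<Rightarrow> 'a::field) \<Rightarrow> ('n \<Rightarrow> nat) \<Rightarrow> 'a" where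
  "mmonom z \<alpha> = (\<Prod>i\<in>UNIV. z i ^ \<alpha> i)"

definition ps_sums :: "('a::field \<Rightarrow> real) \<Rightarrow> (('n::finite \<Rightarrow> nat) \<Rightarrow> 'a)
                       \<Rightarrow> ('n \<Rightarrow> 'a) \<Rightarrow> 'a \<Rightarrow> bool" where
  "ps_sums absv c z v \<longleftrightarrow>
     (\<forall>\<epsilon>>0. finite {\<alpha>. absv (c \<alpha> * mmonom z \<alpha>) \<ge> \<epsilon>}) \<and>
     (\<forall>\<epsilon>>0. \<exists>K. \<forall>k\<ge>K.
        absv ((\<Sum>\<alpha>\<in>{\<alpha>. mdeg \<alpha> \<le> k}. c \<alpha> * mmonom z \<alpha>) - v) < \<epsilon>)"

definition analytic_on_set :: "('a::field \<Rightarrow> real) \<Rightarrow> ('n::finite \<Rightarrow> 'a) set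
                               \<Rightarrow> (('n \<Rightarrow> 'a) \<Rightarrow> 'a) \<Rightarrow> bool" where
  "analytic_on_set absv S f \<longleftrightarrow>
     (\<forall>y\<in>S. \<exists>\<rho>>0. \<exists>c. \<forall>x\<in>S. vnorm absv (\<lambda>i. x i - y i) < \<rho> \<longrightarrow>
        ps_sums absv c (\<lambda>i. x i - y i) (f x))"

definition has_diff0 :: "('a::field \<Rightarrow> real) \<Rightarrow> (('n::finite \<Rightarrow> 'a) \<Rightarrow> 'a)
                          \<Rightarrow> ('n \<Rightarrow> 'a) \<Rightarrow> bool" where
  "has_diff0 absv f l \<longleftrightarrow>
     (\<forall>\<epsilon>>0. \<exists>\<delta>>0. \<forall>x. vnorm absv x < \<delta> \<longrightarrow>
        absv (f x - f (\<lambda>_. 0) - (\<Sum>i\<in>UNIV. l i * x i)) \<le> \<epsilon> * vnorm absv x)"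

definition forms_lin_indep :: "nat \<Rightarrow> (nat \<Rightarrow> ('n::finite \<Rightarrow> 'a::field)) \<Rightarrow> bool" where
  "forms_lin_indep n l \<longleftrightarrow>
     (\<forall>cf :: nat \<Rightarrow> 'a. (\<forall>i. (\<Sum>j<n. cf j * l j i) = 0) \<longrightarrow> (\<forall>j<n. cf j = 0))"

definition funs_lin_indep_on :: "nat \<Rightarrow> (nat \<Rightarrow> 'b \<Rightarrow> complex) \<Rightarrow> 'b set \<Rightarrow> bool" where
  "funs_lin_indep_on n g S \<longleftrightarrow>
     (\<forall>cf :: nat \<Rightarrow> complex. (\<forall>x\<in>S. (\<Sum>j<n. cf j * g j x) = 0) \<longrightarrow> (\<forall>j<n. cf j = 0))"

end

theory Submission
  imports Defs
begin

text \<open>A continuous unitary character of a non-archimedean field is trivial near 0: doubling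
  does not increase absolute values, but it pushes values of \<psi> near 1 away from 1 by a
  factor at least 3/2. Fix a small radius \<delta> on which \<psi> is trivial. For \<open>|t|\<close> large and
  \<open>y \<in> B\<close> the error \<open>t (f\<^sub>j(a y / t) - f\<^sub>j(0) - d\<^sub>0f\<^sub>j(a y / t))\<close> has absolute value below \<delta>,
  so \<open>\<psi>(t f\<^sub>j(a y / t)) = \<psi>(t f\<^sub>j(0)) \<psi>(a d\<^sub>0f\<^sub>j(y))\<close>. Since B is an additive group, the
  \<open>y \<mapsto> \<psi>(a d\<^sub>0f\<^sub>j(y))\<close> are characters of B; they are pairwise distinct once \<open>|a|\<close> is large,
  hence linearly independent by Artin's lemma.\<close>

lemma characters_lin_indep:
  fixes \<chi> :: "nat \<Rightarrow> 'b \<Rightarrow> 'c::field" and p :: "'b \<Rightarrow> 'b \<Rightarrow> 'b"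
  assumes closed: "\<And>x y. x \<in> S \<Longrightarrow> y \<in> S \<Longrightarrow> p x y \<in> S"
    and "z \<in> S"
    and mult: "\<And>j x y. x \<in> S \<Longrightarrow> y \<in> S \<Longrightarrow> \<chi> j (p x y) = \<chi> j x * \<chi> j y"
    and nonzero: "\<And>j x. x \<in> S \<Longrightarrow> \<chi> j x \<noteq> 0"
    and distinct: "\<And>j k. j < k \<Longrightarrow> k < n \<Longrightarrow> \<exists>y\<in>S. \<chi> j y \<noteq> \<chi> k y"
  shows "\<forall>c. (\<forall>x\<in>S. (\<Sum>j<n. c j * \<chi> j x) = 0) \<longrightarrow> (\<forall>j<n. c j = 0)"
  using distinct
proof (induction n)
  case 0
  show ?case by simp
next
  case (Suc n)
  show ?case
  proof (rule allI, rule impI)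
    fix c assume rel: "\<forall>x\<in>S. (\<Sum>j<Suc n. c j * \<chi> j x) = 0"
    have below_n: "c j = 0" if "j < n" for j
    proof -
      obtain y where y: "y \<in> S" "\<chi> j y \<noteq> \<chi> n y"
        using Suc.prems[of j n] \<open>j < n\<close> by auto
      \<comment> \<open>Evaluating the relation at \<open>p y x\<close> and subtracting \<open>\<chi>\<^sub>n(y)\<close> times its value at x
        eliminates \<open>\<chi>\<^sub>n\<close>.\<close>
      have eliminated: "(\<Sum>k<n. (c k * (\<chi> k y - \<chi> n y)) * \<chi> k x) = 0" if x: "x \<in> S" for x
      proof -
        have "(\<Sum>k<n. (c k * (\<chi> k y - \<chi> n y)) * \<chi> k x)
            = (\<Sum>k<Suc n. c k * \<chi> k (p y x) - \<chi> n y * (c k * \<chi> k x))"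
          by (simp add: mult[OF y(1) x] algebra_simps)
        also have "\<dots> = (\<Sum>k<Suc n. c k * \<chi> k (p y x)) - \<chi> n y * (\<Sum>k<Suc n. c k * \<chi> k x)"
          by (simp only: sum_subtractf sum_distrib_left)
        also have "\<dots> = 0"
          using rel closed[OF y(1) x] x by simp
        finally show ?thesis .
      qed
      have "\<And>j k. j < k \<Longrightarrow> k < n \<Longrightarrow> \<exists>y\<in>S. \<chi> j y \<noteq> \<chi> k y"
        using Suc.prems by simp
      then have "c j * (\<chi> j y - \<chi> n y) = 0"
        using Suc.IH[rule_format, of "\<lambda>k. c k * (\<chi> k y - \<chi> n y)"] eliminated \<open>j < n\<close>
        by blast
      then show ?thesis using y(2) by simp
    qed
    have "(\<Sum>j<Suc n. c j * \<chi> j z) = 0" using rel \<open>z \<in> S\<close> by blast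
    then have "c n * \<chi> n z = 0" using below_n by simp
    then have "c n = 0" using nonzero[OF \<open>z \<in> S\<close>] by simp
    then show "\<forall>j<Suc n. c j = 0" using below_n less_Suc_eq by auto
  qed
qed

lemma funs_lin_indep_on_image:
  assumes indep: "funs_lin_indep_on n \<chi> S"
    and factor: "\<And>j y. j < n \<Longrightarrow> y \<in> S \<Longrightarrow> g j (h y) = c j * \<chi> j y"
    and nonzero: "\<And>j. j < n \<Longrightarrow> c j \<noteq> 0"
  shows "funs_lin_indep_on n g (h ` S)"
  unfolding funs_lin_indep_on_def
proof (rule allI, rule impI)
  fix b assume rel: "\<forall>x\<in>h ` S. (\<Sum>j<n. b j * g j x) = 0"
  have "(\<Sum>j<n. (b j * c j) * \<chi> j y) = 0" if "y \<in> S" for y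
  proof -
    have "(\<Sum>j<n. (b j * c j) * \<chi> j y) = (\<Sum>j<n. b j * g j (h y))"
      using that by (simp add: factor mult.assoc)
    also have "\<dots> = 0" using rel that by blast
    finally show ?thesis .
  qed
  then have "\<forall>j<n. b j * c j = 0"
    using spec[OF indep[unfolded funs_lin_indep_on_def], of "\<lambda>j. b j * c j"] by blast
  then show "\<forall>j<n. b j = 0" using nonzero by simp
qed

lemma forms_lin_indep_imp_distinct:
  fixes l :: "nat \<Rightarrow> 'n::finite \<Rightarrow> 'a::field"
  assumes "forms_lin_indep n l" "j < n" "k < n" "j \<noteq> k"
  shows "l j \<noteq> l k"
proof
  assume eq: "l j = l k"
  define c where "c m = (if m = j then 1 else if m = k then -1 else (0::'a))" for m
  have "(\<Sum>m<n. c m * l m i) = l j i - l k i" for i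
  proof -
    have "(\<Sum>m<n. c m * l m i) = (\<Sum>m<n. (if m = j then l j i else 0) - (if m = k then l k i else 0))"
      using \<open>j \<noteq> k\<close> by (intro sum.cong) (auto simp: c_def)
    then show ?thesis using assms(2,3) by (simp add: sum_subtractf)
  qed
  then have "\<forall>i. (\<Sum>m<n. c m * l m i) = 0" using eq by simp
  then have "c j = 0" using assms(1,2) unfolding forms_lin_indep_def by blast
  then show False by (simp add: c_def)
qed

lemma unit_circle_near_1:
  fixes w :: complex
  assumes "cmod w = 1" "cmod (w - 1) < 1"
  shows "3/2 \<le> cmod (w + 1)"
proof -
  have circle: "Re w ^ 2 + Im w ^ 2 = 1" using assms(1) cmod_power2[of w] by simp
  have "cmod (w - 1) ^ 2 < 1" using assms(2) by (simp add: power_less_one_iff)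
  then have "(Re w - 1) ^ 2 + Im w ^ 2 < 1" using cmod_power2[of "w - 1"] by simp
  then have "Re w > 1/2" using circle by (simp add: power2_eq_square algebra_simps)
  moreover have "Re (w + 1) \<le> cmod (w + 1)" by (rule complex_Re_le_cmod)
  ultimately show ?thesis by simp
qed

definition linform :: "('n::finite \<Rightarrow> 'a::comm_semiring_0) \<Rightarrow> ('n \<Rightarrow> 'a) \<Rightarrow> 'a" where
  "linform l x = (\<Sum>i\<in>UNIV. l i * x i)"

lemma linform_add: "linform l (\<lambda>i. x i + y i) = linform l x + linform l y"
  by (simp add: linform_def distrib_left sum.distrib)

lemma linform_vscale: "linform l (vscale c x) = c * linform l x"
  by (simp add: linform_def vscale_def sum_distrib_left ac_simps)

lemma linform_single: "linform l (\<lambda>i'. if i' = i then s else 0) = l i * s"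
  by (simp add: linform_def if_distrib cong: if_cong)

lemma vnorm_le_iff: "vnorm absv x \<le> c \<longleftrightarrow> (\<forall>i. absv (x i) \<le> c)"
  unfolding vnorm_def by (subst Max_le_iff) auto

lemma abs_le_vnorm: "absv (x i) \<le> vnorm absv x"
  using vnorm_le_iff[of absv x "vnorm absv x"] by simp

lemma has_diff0_uniform:
  fixes n :: nat
  assumes "\<forall>j<n. has_diff0 absv (f j) (l j)" "\<epsilon> > 0"
  shows "\<exists>\<delta>>0. \<forall>j<n. \<forall>x. vnorm absv x < \<delta> \<longrightarrow>
           absv (f j x - f j (\<lambda>_. 0) - linform (l j) x) \<le> \<epsilon> * vnorm absv x"
  using assms(1)
proof (induction n)
  case 0
  show ?case using zero_less_one by blast
next
  case (Suc n)
  obtain \<delta>1 where "\<delta>1 > 0" and below_n: "\<forall>j<n. \<forall>x. vnorm absv x < \<delta>1 \<longrightarrow>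
      absv (f j x - f j (\<lambda>_. 0) - linform (l j) x) \<le> \<epsilon> * vnorm absv x"
    using Suc by auto
  obtain \<delta>2 where "\<delta>2 > 0" and at_n: "\<forall>x. vnorm absv x < \<delta>2 \<longrightarrow>
      absv (f n x - f n (\<lambda>_. 0) - linform (l n) x) \<le> \<epsilon> * vnorm absv x"
    using Suc.prems \<open>\<epsilon> > 0\<close> unfolding has_diff0_def linform_def by blast
  show ?case
    using \<open>\<delta>1 > 0\<close> \<open>\<delta>2 > 0\<close> below_n at_n
    by (intro exI[of _ "min \<delta>1 \<delta>2"]) (auto simp: less_Suc_eq)
qed

locale nonarch_absval =
  fixes absv :: "'a::field \<Rightarrow> real"
  assumes nonarch_abs: "nonarch_abs absv"
begin

lemma nonneg [simp]: "absv x \<ge> 0"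
  and eq_0_iff [simp]: "absv x = 0 \<longleftrightarrow> x = 0"
  and mult [simp]: "absv (x * y) = absv x * absv y"
  and ultrametric: "absv (x + y) \<le> max (absv x) (absv y)"
  using nonarch_abs unfolding nonarch_abs_def by auto

lemma zero [simp]: "absv 0 = 0"
  by simp

lemma pos: "x \<noteq> 0 \<Longrightarrow> absv x > 0"
  using nonneg[of x] eq_0_iff[of x] by linarith

lemma one [simp]: "absv 1 = 1"
  using mult[of 1 1] pos[of 1] by simp

lemma divide [simp]: "absv (x / y) = absv x / absv y"
proof (cases "y = 0")
  case False
  then have "absv x = absv (x / y) * absv y" using mult[of "x / y" y] by simp
  then show ?thesis using False by simp
qed simp

lemma power [simp]: "absv (x ^ m) = absv x ^ m"
  by (induction m) simp_all

lemma add_le: "absv x \<le> c \<Longrightarrow> absv y \<le> c \<Longrightarrow> absv (x + y) \<le> c"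
  using ultrametric[of x y] by linarith

lemma of_nat_le_1: "absv (of_nat m) \<le> 1"
  by (induction m) (simp_all add: add_le)

lemma unbounded:
  assumes "x \<noteq> 0" "absv x \<noteq> 1"
  obtains a where "a \<noteq> 0" "K \<le> absv a"
proof -
  obtain y where y: "y \<noteq> 0" "absv y > 1"
  proof (cases "absv x > 1")
    case False
    then have "absv (1 / x) > 1" using assms pos[of x] by (simp add: field_simps)
    then show ?thesis using that[of "1 / x"] assms by simp
  qed (use that assms in auto)
  obtain m where "K < absv y ^ m" using real_arch_pow[OF y(2)] by blast
  then show ?thesis using that[of "y ^ m"] y by simp
qed

lemma vnorm_vscale_le: "vnorm absv (vscale c x) \<le> absv c * vnorm absv x"
  unfolding vnorm_le_iff vscale_def by (simp add: mult_left_mono abs_le_vnorm)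

lemma vball0_add: "x \<in> vball0 absv r \<Longrightarrow> y \<in> vball0 absv r \<Longrightarrow> (\<lambda>i. x i + y i) \<in> vball0 absv r"
  unfolding vball0_def by (simp add: vnorm_le_iff add_le)

lemma zero_in_vball0: "r \<ge> 0 \<Longrightarrow> (\<lambda>_. 0) \<in> vball0 absv r"
  unfolding vball0_def by (simp add: vnorm_le_iff)

lemma unitary_char_trivial_on_ball:
  fixes \<psi> :: "'a \<Rightarrow> complex"
  assumes add: "\<And>x y. \<psi> (x + y) = \<psi> x * \<psi> y"
    and unit: "\<And>x. cmod (\<psi> x) = 1"
    and near_1: "\<And>y. absv y < \<delta> \<Longrightarrow> cmod (\<psi> y - 1) < 1"
    and "absv z < \<delta>"
  shows "\<psi> z = 1"
proof (rule ccontr)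
  assume "\<psi> z \<noteq> 1"
  have "absv (2 ^ m * z) \<le> absv z" for m
    using of_nat_le_1[of "2 ^ m"] by (simp add: mult_left_le_one_le)
  then have small: "absv (2 ^ m * z) < \<delta>" for m
    using \<open>absv z < \<delta>\<close> order.strict_trans1 by blast
  have doubling: "3/2 * cmod (\<psi> w - 1) \<le> cmod (\<psi> (w + w) - 1)" if "absv w < \<delta>" for w
  proof -
    have "3/2 * cmod (\<psi> w - 1) \<le> cmod (\<psi> w + 1) * cmod (\<psi> w - 1)"
      using unit_circle_near_1[OF unit near_1[OF that]] by (intro mult_right_mono) auto
    also have "\<dots> = cmod ((\<psi> w + 1) * (\<psi> w - 1))"
      by (simp add: norm_mult)
    also have "(\<psi> w + 1) * (\<psi> w - 1) = \<psi> (w + w) - 1"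
      unfolding add by (simp add: algebra_simps)
    finally show ?thesis .
  qed
  have growth: "(3/2) ^ m * cmod (\<psi> z - 1) \<le> cmod (\<psi> (2 ^ m * z) - 1)" for m
  proof (induction m)
    case (Suc m)
    have "(3/2) ^ Suc m * cmod (\<psi> z - 1) \<le> 3/2 * cmod (\<psi> (2 ^ m * z) - 1)"
      using Suc.IH by (simp add: ac_simps)
    also have "\<dots> \<le> cmod (\<psi> (2 ^ m * z + 2 ^ m * z) - 1)"
      by (rule doubling[OF small])
    also have "2 ^ m * z + 2 ^ m * z = (2::'a) ^ Suc m * z"
      by simp
    finally show ?case .
  qed simp
  obtain m where "1 / cmod (\<psi> z - 1) < (3/2) ^ m"
    using real_arch_pow[of "3/2"] by auto
  then have "1 < (3/2) ^ m * cmod (\<psi> z - 1)"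
    using \<open>\<psi> z \<noteq> 1\<close> by (simp add: field_simps)
  then show False using growth[of m] near_1[OF small[of m]] by simp
qed

lemma add_char_trivial_near_0:
  assumes "nontriv_add_char absv \<psi>"
  obtains \<delta> where "\<delta> > 0" "\<And>z. absv z < \<delta> \<Longrightarrow> \<psi> z = 1"
proof -
  have add: "\<And>x y. \<psi> (x + y) = \<psi> x * \<psi> y" and unit: "\<And>x. cmod (\<psi> x) = 1"
    using assms unfolding nontriv_add_char_def by auto
  have cont: "\<exists>\<delta>>0. \<forall>y. absv y < \<delta> \<longrightarrow> cmod (\<psi> y - \<psi> 0) < 1"
    using assms unfolding nontriv_add_char_def by (metis diff_zero zero_less_one)
  have "\<psi> 0 = 1"
    using add[of 0 0] unit[of 0] by (metis add_0 mult_cancel_right1 norm_zero zero_neq_one)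
  then show ?thesis
    using cont that unitary_char_trivial_on_ball[OF add unit] by auto
qed

lemma large_scale_separates:
  fixes \<psi> :: "'a \<Rightarrow> complex"
  assumes "nontriv_add_char absv \<psi>" "l \<noteq> l'" "r > 0"
  shows "\<exists>K. \<forall>a. K \<le> absv a \<longrightarrow>
           (\<exists>y\<in>vball0 absv r. \<psi> (a * linform l y) \<noteq> \<psi> (a * linform l' y))"
proof -
  have add: "\<And>x y. \<psi> (x + y) = \<psi> x * \<psi> y" and unit: "\<And>x. cmod (\<psi> x) = 1"
    using assms(1) unfolding nontriv_add_char_def by auto
  obtain x0 where "\<psi> x0 \<noteq> 1" using assms(1) unfolding nontriv_add_char_def by auto
  obtain i where "l i \<noteq> l' i" using assms(2) by auto
  define d where "d = l i - l' i"
  have "d \<noteq> 0" "absv d > 0" using \<open>l i \<noteq> l' i\<close> pos unfolding d_def by simp_all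
  \<comment> \<open>The witness \<open>x\<^sub>0 / (a d) e\<^sub>i\<close> makes the two characters differ by the factor \<open>\<psi>(x\<^sub>0)\<close>.\<close>
  define K where "K = absv x0 / (r * absv d) + 1"
  have "K > 0" using \<open>r > 0\<close> \<open>absv d > 0\<close> by (simp add: K_def add_nonneg_pos)
  have "\<exists>y\<in>vball0 absv r. \<psi> (a * linform l y) \<noteq> \<psi> (a * linform l' y)" if "K \<le> absv a" for a
  proof
    define s where "s = x0 / (a * d)"
    have "absv a > 0" using that \<open>K > 0\<close> by linarith
    have "absv x0 / (r * absv d) \<le> absv a" using that unfolding K_def by simp
    then have "absv s \<le> r"
      using \<open>absv a > 0\<close> \<open>absv d > 0\<close> \<open>r > 0\<close> by (simp add: s_def field_simps)
    then show "(\<lambda>i'. if i' = i then s else 0) \<in> vball0 absv r"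
      unfolding vball0_def using \<open>r > 0\<close> by (simp add: vnorm_le_iff)
    have "a \<noteq> 0" using \<open>absv a > 0\<close> by auto
    then have "a * d * s = x0" using \<open>d \<noteq> 0\<close> by (simp add: s_def)
    then have "a * (l i * s) = a * (l' i * s) + x0" by (simp add: d_def algebra_simps)
    then have "\<psi> (a * (l i * s)) = \<psi> (a * (l' i * s)) * \<psi> x0" by (simp add: add)
    then show "\<psi> (a * linform l (\<lambda>i'. if i' = i then s else 0))
        \<noteq> \<psi> (a * linform l' (\<lambda>i'. if i' = i then s else 0))"
      using \<open>\<psi> x0 \<noteq> 1\<close> unit[of "a * (l' i * s)"] by (auto simp: linform_single)
  qed
  then show ?thesis by blast
qed

lemma exists_scale_chars_lin_indep:
  fixes \<psi> :: "'a \<Rightarrow> complex" and l :: "nat \<Rightarrow> 'n::finite \<Rightarrow> 'a"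
  assumes "x \<noteq> 0" "absv x \<noteq> 1" "nontriv_add_char absv \<psi>" "r > 0"
    and distinct: "\<And>j k. j < k \<Longrightarrow> k < n \<Longrightarrow> l j \<noteq> l k"
  obtains a where "a \<noteq> 0" "funs_lin_indep_on n (\<lambda>j y. \<psi> (a * linform (l j) y)) (vball0 absv r)"
proof -
  have add: "\<And>x y. \<psi> (x + y) = \<psi> x * \<psi> y" and unit: "\<And>x. cmod (\<psi> x) = 1"
    using assms(3) unfolding nontriv_add_char_def by auto
  have nonzero: "\<psi> x \<noteq> 0" for x
    using unit[of x] by auto
  let ?separates = "\<lambda>a (j, k). \<exists>y\<in>vball0 absv r. \<psi> (a * linform (l j) y) \<noteq> \<psi> (a * linform (l k) y)"
  have "finite {(j, k). j < k \<and> k < n}"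
    by (rule finite_subset[of _ "{..<n} \<times> {..<n}"]) auto
  moreover have "\<forall>jk\<in>{(j, k). j < k \<and> k < n}. \<forall>\<^sub>F K in at_top. \<forall>a. K \<le> absv a \<longrightarrow> ?separates a jk"
  proof
    fix jk assume "jk \<in> {(j, k). j < k \<and> k < n}"
    then obtain j k where "jk = (j, k)" "j < k" "k < n" by auto
    then obtain K where "\<forall>a. K \<le> absv a \<longrightarrow> ?separates a jk"
      using large_scale_separates[OF assms(3) distinct[OF \<open>j < k\<close> \<open>k < n\<close>] assms(4)] \<open>jk = (j, k)\<close>
      by auto
    then show "\<forall>\<^sub>F K in at_top. \<forall>a. K \<le> absv a \<longrightarrow> ?separates a jk"
      unfolding eventually_at_top_linorder by (meson order_trans)
  qed
  ultimately have "\<forall>\<^sub>F K in at_top. \<forall>jk\<in>{(j, k). j < k \<and> k < n}. \<forall>a. K \<le> absv a \<longrightarrow> ?separates a jk"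
    by (rule eventually_ball_finite)
  then obtain K where K: "\<And>a j k. K \<le> absv a \<Longrightarrow> j < k \<Longrightarrow> k < n \<Longrightarrow> ?separates a (j, k)"
    unfolding eventually_at_top_linorder by blast
  obtain a where "a \<noteq> 0" "K \<le> absv a" using unbounded[OF assms(1,2)] by blast
  have "\<forall>c. (\<forall>y\<in>vball0 absv r. (\<Sum>j<n. c j * \<psi> (a * linform (l j) y)) = 0) \<longrightarrow> (\<forall>j<n. c j = 0)"
    using assms(4) K[OF \<open>K \<le> absv a\<close>] nonzero
    by (intro characters_lin_indep[where p = "\<lambda>x y i. x i + y i" and z = "\<lambda>_. 0"])
       (auto simp: vball0_add zero_in_vball0 linform_add add distrib_left)
  then show ?thesis using that \<open>a \<noteq> 0\<close> unfolding funs_lin_indep_on_def by blast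
qed

lemma char_of_linearization:
  fixes \<psi> :: "'a \<Rightarrow> complex" and f :: "('n::finite \<Rightarrow> 'a) \<Rightarrow> 'a"
  assumes add: "\<And>x y. \<psi> (x + y) = \<psi> x * \<psi> y"
    and trivial: "\<And>z. absv z < \<delta>\<^sub>0 \<Longrightarrow> \<psi> z = 1"
    and approx: "\<And>x. vnorm absv x < \<delta> \<Longrightarrow>
                   absv (f x - f (\<lambda>_. 0) - linform l x) \<le> \<epsilon> * vnorm absv x"
    and "\<epsilon> \<ge> 0" "\<epsilon> * (absv a * r) < \<delta>\<^sub>0"
    and "t \<noteq> 0" "absv a * r < \<delta> * absv t" "y \<in> vball0 absv r"
  shows "\<psi> (t * f (vscale (a / t) y)) = \<psi> (t * f (\<lambda>_. 0)) * \<psi> (a * linform l y)"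
proof -
  define x where "x = vscale (a / t) y"
  have "absv t > 0" using \<open>t \<noteq> 0\<close> pos by simp
  have "vnorm absv x \<le> absv (a / t) * vnorm absv y"
    unfolding x_def by (rule vnorm_vscale_le)
  also have "\<dots> \<le> absv (a / t) * r"
    using \<open>y \<in> vball0 absv r\<close> unfolding vball0_def by (intro mult_left_mono) auto
  finally have norm_x: "absv t * vnorm absv x \<le> absv a * r"
    using \<open>absv t > 0\<close> by (simp add: field_simps)
  then have "absv t * vnorm absv x < absv t * \<delta>"
    using \<open>absv a * r < \<delta> * absv t\<close> by (simp add: mult.commute)
  then have "vnorm absv x < \<delta>"
    using \<open>absv t > 0\<close> by simp
  define e where "e = t * (f x - f (\<lambda>_. 0) - linform l x)"
  have "absv e \<le> absv t * (\<epsilon> * vnorm absv x)"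
    using approx[OF \<open>vnorm absv x < \<delta>\<close>] \<open>absv t > 0\<close> unfolding e_def by simp
  also have "\<dots> \<le> \<epsilon> * (absv a * r)"
    using norm_x \<open>\<epsilon> \<ge> 0\<close> by (simp add: mult.left_commute mult_left_mono)
  finally have "\<psi> e = 1" using trivial \<open>\<epsilon> * (absv a * r) < \<delta>\<^sub>0\<close> by simp
  have "t * f x = (t * f (\<lambda>_. 0) + a * linform l y) + e"
    using \<open>t \<noteq> 0\<close> unfolding e_def x_def linform_vscale by (simp add: algebra_simps)
  then show ?thesis using \<open>\<psi> e = 1\<close> unfolding x_def by (simp add: add)
qed

lemma char_factorizes_for_large_t:
  fixes \<psi> :: "'a \<Rightarrow> complex" and f :: "nat \<Rightarrow> ('n::finite \<Rightarrow> 'a) \<Rightarrow> 'a"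
  assumes add: "\<And>x y. \<psi> (x + y) = \<psi> x * \<psi> y"
    and trivial: "\<And>z. absv z < \<delta>\<^sub>0 \<Longrightarrow> \<psi> z = 1" and "\<delta>\<^sub>0 > 0"
    and "\<forall>j<n. has_diff0 absv (f j) (l j)" "a \<noteq> 0" "r > 0"
  obtains R where "\<And>t j y. t \<noteq> 0 \<Longrightarrow> R < absv t \<Longrightarrow> j < n \<Longrightarrow> y \<in> vball0 absv r \<Longrightarrow>
    \<psi> (t * f j (vscale (a / t) y)) = \<psi> (t * f j (\<lambda>_. 0)) * \<psi> (a * linform (l j) y)"
proof -
  define \<epsilon> where "\<epsilon> = \<delta>\<^sub>0 / (2 * (absv a * r))"
  have "absv a * r > 0" using pos[OF \<open>a \<noteq> 0\<close>] \<open>r > 0\<close> by simp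
  then have "\<epsilon> > 0" "\<epsilon> * (absv a * r) < \<delta>\<^sub>0" using \<open>\<delta>\<^sub>0 > 0\<close> by (simp_all add: \<epsilon>_def)
  obtain \<delta> where "\<delta> > 0" and approx: "\<forall>j<n. \<forall>x. vnorm absv x < \<delta> \<longrightarrow>
      absv (f j x - f j (\<lambda>_. 0) - linform (l j) x) \<le> \<epsilon> * vnorm absv x"
    using has_diff0_uniform[OF assms(4) \<open>\<epsilon> > 0\<close>] by blast
  have "\<psi> (t * f j (vscale (a / t) y)) = \<psi> (t * f j (\<lambda>_. 0)) * \<psi> (a * linform (l j) y)"
    if "t \<noteq> 0" "absv a * r / \<delta> < absv t" "j < n" "y \<in> vball0 absv r" for t j y
  proof -
    have "absv a * r < \<delta> * absv t"
      using that(2) \<open>\<delta> > 0\<close> by (simp add: pos_divide_less_eq mult.commute)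
    then show ?thesis
      using approx \<open>j < n\<close> \<open>\<epsilon> > 0\<close>
      by (intro char_of_linearization[OF add trivial _ _ \<open>\<epsilon> * (absv a * r) < \<delta>\<^sub>0\<close> \<open>t \<noteq> 0\<close> _ that(4)])
         auto
  qed
  then show ?thesis using that by blast
qed

end

theorem lemma2p7:
  fixes absv :: "'a::field_char_0 \<Rightarrow> real"
    and \<psi> :: "'a \<Rightarrow> complex"
    and r :: real
    and n :: nat
    and f :: "nat \<Rightarrow> ('n::finite \<Rightarrow> 'a) \<Rightarrow> 'a"
    and l :: "nat \<Rightarrow> ('n \<Rightarrow> 'a)"
  assumes "p_adic_field absv"
    and "nontriv_add_char absv \<psi>"
    and "r > 0"
    and "\<forall>j<n. analytic_on_set absv (vball0 absv r) (f j)"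
    and "\<forall>j<n. has_diff0 absv (f j) (l j)"
    and "forms_lin_indep n l"
  shows "\<exists>a. a \<noteq> 0 \<and> (\<exists>R. \<forall>t. t \<noteq> 0 \<and> absv t > R \<longrightarrow>
           funs_lin_indep_on n (\<lambda>j x. \<psi> (t * f j x))
             (vscale (a / t) ` vball0 absv r))"
proof -
  interpret nonarch_absval absv
    using assms(1) by unfold_locales (simp add: p_adic_field_def)
  obtain x where "x \<noteq> 0" "absv x \<noteq> 1" using assms(1) unfolding p_adic_field_def by blast
  have add: "\<And>x y. \<psi> (x + y) = \<psi> x * \<psi> y" and unit: "\<And>x. cmod (\<psi> x) = 1"
    using assms(2) unfolding nontriv_add_char_def by auto
  have nonzero: "\<psi> x \<noteq> 0" for x
    using unit[of x] by auto
  have "l j \<noteq> l k" if "j < k" "k < n" for j k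
    using that by (intro forms_lin_indep_imp_distinct[OF assms(6)]) auto
  then obtain a where "a \<noteq> 0"
    and indep: "funs_lin_indep_on n (\<lambda>j y. \<psi> (a * linform (l j) y)) (vball0 absv r)"
    using exists_scale_chars_lin_indep[OF \<open>x \<noteq> 0\<close> \<open>absv x \<noteq> 1\<close> assms(2,3)] by blast
  obtain \<delta>\<^sub>0 where "\<delta>\<^sub>0 > 0" and trivial: "\<And>z. absv z < \<delta>\<^sub>0 \<Longrightarrow> \<psi> z = 1"
    using add_char_trivial_near_0[OF assms(2)] by blast
  obtain R where factor: "\<And>t j y. t \<noteq> 0 \<Longrightarrow> R < absv t \<Longrightarrow> j < n \<Longrightarrow> y \<in> vball0 absv r \<Longrightarrow>
      \<psi> (t * f j (vscale (a / t) y)) = \<psi> (t * f j (\<lambda>_. 0)) * \<psi> (a * linform (l j) y)"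
    using char_factorizes_for_large_t[OF add trivial \<open>\<delta>\<^sub>0 > 0\<close> assms(5) \<open>a \<noteq> 0\<close> assms(3)] by blast
  have "funs_lin_indep_on n (\<lambda>j x. \<psi> (t * f j x)) (vscale (a / t) ` vball0 absv r)"
    if "t \<noteq> 0" "R < absv t" for t
    using that factor nonzero
    by (intro funs_lin_indep_on_image[OF indep, of _ _ "\<lambda>j. \<psi> (t * f j (\<lambda>_. 0))"]) auto
  then show ?thesis using \<open>a \<noteq> 0\<close> by blast
qed

end
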